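(* Let $a\in\mathbb{N}_0$, $b\notin\mathbb{Z}$, and let $\check T=T(a,b)$ be the classical Jacobi operator. Its index sets are $\check I_1=\check I_4=\mathbb{N}_0$ and $\check I_2=\check I_3=\{0,1,\ldots,a-1\}$. The type 1 and type 4 quasi-rational eigenvalues are simple (i.e. $\mathrm{Ric}_\lambda(\check T)$ is a singleton of the respective type). The type 2 and 3 eigenvalues are degenerate and coincide: $\check\sigma_{23}:=\check\sigma_2=\check\sigma_3$, and for $\lambda\in\check\sigma_{23}$ the set $\mathrm{Ric}_\lambda(\check T)$ consists of exactly two elements, one of type 2 and one of type 3. Moreover $\sigma_{\mathrm{qr}}(\check T)=\check\sigma_1\sqcup\check\sigma_{23}\sqcup\check\sigma_4$ (disjoint union).
   Context: $D=d/dx$; $T(a,b)=(x^2-1)\big(D^2+(\frac{a+1}{x-1}+\frac{b+1}{x+1})D\big)$. For $T=pD^2+qD+r$, $\mathrm{Ric}_\lambda(T)$ is the set of rational $w$ with $p(w'+w^2)+qw+r=\lambda$ (log-derivatives of quasi-rational eigenfunctions $\phi$, $T\phi=\lambda\phi$, $\phi'/\phi=w$) and $\sigma_{\mathrm{qr}}(T)=\{\lambda:\mathrm{Ric}_\lambda(T)\ne\emptyset\}$. Asymptotic type of $w$ (and of $\phi$): 1 if $w$ regular at $x=\pm1$; 2 if poles at both; 3 if pole at $x=1$ only; 4 if pole at $x=-1$ only. Degree of $\phi$: $\lim_{x\to\infty}xw(x)$. The index of a type $\imath$ quasi-rational eigenfunction of $T(a,b)$ is $\deg\phi-d_\imath$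 with $d_1=0$, $d_2=-a-b$, $d_3=-a$, $d_4=-b$; $\check I_\imath$ is the set of indices of type $\imath$ eigenfunctions, and $\check\sigma_\imath=\lambda_\imath(\check I_\imath;a,b)$ with $\lambda_1(k;a,b)=k(k+a+b+1)$, $\lambda_2(k;a,b)=(k-a-b)(k+1)$, $\lambda_3(k;a,b)=(k-a)(k+b+1)$, $\lambda_4(k;a,b)=(k-b)(k+a+1)$ (the eigenvalue of a type $\imath$ eigenfunction of index $k$). *)

theory Defs
  imports "HOL-Computational_Algebra.Computational_Algebra" "HOL-Computational_Algebra.Field_as_Ring" "HOL-Analysis.Analysis"
begin

text \<open>The normalized (coprime, unit-normalized
  denominator) representation is given by quot_of_fract.\<close>

type_synonym rfun = "complex poly fract"

definition rnum :: "rfun \<Rightarrow> complex poly" where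
  "rnum w = fst (quot_of_fract w)"

definition rden :: "rfun \<Rightarrow> complex poly" where
  "rden w = snd (quot_of_fract w)"

text \<open>Evaluation of a rational function at a point (meaningful away from poles).\<close>
definition reval :: "rfun \<Rightarrow> complex \<Rightarrow> complex" where
  "reval w x = poly (rnum w) x / poly (rden w) x"

definition rderiv :: "rfun \<Rightarrow> rfun" where
  "rderiv w = to_fract (pderiv (rnum w) * rden w - rnum w * pderiv (rden w))
              / to_fract (rden w ^ 2)"

text \<open>A second order operator T = p D^2 + q D + r with polynomial coefficients,
  encoded as the triple (p, q, r).\<close>
type_synonym op2 = "complex poly \<times> complex poly \<times> complex poly"

definition Ric :: "op2 \<Rightarrow> complex \<Rightarrow> rfun set" where
  "Ric T ev = (case T of (p, q, r) \<Rightarrow>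
     {w. to_fract p * (rderiv w + w ^ 2) + to_fract q * w + to_fract r = to_fract [:ev:]})"

definition sigma_qr :: "op2 \<Rightarrow> complex set" where
  "sigma_qr T = {ev. Ric T ev \<noteq> {}}"

text \<open>The Jacobi operator T(a,b) = (x^2-1)(D^2 + ((a+1)/(x-1) + (b+1)/(x+1)) D),
  i.e. p = x^2 - 1, q = (a+b+2) x + (a-b), r = 0.\<close>
definition jacobiT :: "complex \<Rightarrow> complex \<Rightarrow> op2" where
  "jacobiT a b = ([:-1, 0, 1:], [:a - b, a + b + 2:], 0)"

definition has_pole_at :: "rfun \<Rightarrow> complex \<Rightarrow> bool" where
  "has_pole_at w c \<longleftrightarrow> poly (rden w) c = 0"

definition asym_type :: "rfun \<Rightarrow> nat" where
  "asym_type w =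
     (if \<not> has_pole_at w 1 \<and> \<not> has_pole_at w (-1) then 1
      else if has_pole_at w 1 \<and> has_pole_at w (-1) then 2
      else if has_pole_at w 1 then 3 else 4)"

text \<open>Degree of the quasi-rational function phi with phi'/phi = w: lim_{x\<rightarrow>\<infinity>} x w(x).\<close>
definition qr_degree :: "rfun \<Rightarrow> complex" where
  "qr_degree w = Lim at_infinity (\<lambda>x. x * reval w x)"

definition dshift :: "nat \<Rightarrow> complex \<Rightarrow> complex \<Rightarrow> complex" where
  "dshift i a b = (if i = 1 then 0 else if i = 2 then - a - b else if i = 3 then - a else - b)"

definition index_set :: "nat \<Rightarrow> complex \<Rightarrow> complex \<Rightarrow> complex set" where
  "index_set i a b = {qr_degree w - dshift i a b | w ev.
      w \<in> Ric (jacobiT a b) ev \<and> asym_type w = i}"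

definition lam :: "nat \<Rightarrow> complex \<Rightarrow> complex \<Rightarrow> complex \<Rightarrow> complex" where
  "lam i k a b = (if i = 1 then k * (k + a + b + 1)
      else if i = 2 then (k - a - b) * (k + 1)
      else if i = 3 then (k - a) * (k + b + 1)
      else (k - b) * (k + a + 1))"

definition sigma_check :: "nat \<Rightarrow> complex \<Rightarrow> complex \<Rightarrow> complex set" where
  "sigma_check i a b = (\<lambda>k. lam i k a b) ` index_set i a b"

end

theory Submission
  imports Defs
begin

text \<open>A rational solution w = \<phi>'/\<phi> of the Riccati equation of T(A, B) has only simple
  poles, all at \<plusminus>1, and decays like 1/x at infinity. Hence w is the logarithmic derivative of
  (x - 1)^e1 (x + 1)^e2 Q(x) with Q a polynomial not vanishing at \<plusminus>1 and exponents solving the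
  indicial equations, e1 \<in> {0, -A} and e2 \<in> {0, -B}; then Q is a polynomial eigenfunction of the
  Jacobi operator with parameters (A + 2 e1, B + 2 e2), and the eigenvalue of \<phi> is
  lam 1 (deg Q + e1 + e2). For A = a \<in> \<nat> and B = b \<notin> \<int> all four Jacobi eigenproblems are
  nondegenerate, so each degree k carries exactly one eigenpolynomial up to scaling, which vanishes
  at 1 exactly when e1 = -a and k \<ge> a. Comparing the eigenvalues, again using b \<notin> \<int>, the only
  coincidences are lam 2 k = lam 3 (a - 1 - k).\<close>

section \<open>Rational functions\<close>

lemma Fract_rnum_rden: "Fract (rnum w) (rden w) = w"
  by (simp add: rnum_def rden_def)

lemma rden_nonzero [simp]: "rden w \<noteq> 0"
  by (simp add: rden_def)

lemma coprime_rnum_rden: "coprime (rnum w) (rden w)"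
  by (simp add: rnum_def rden_def coprime_quot_of_fract)

lemma rnum_rden_Fract:
  assumes "d \<noteq> 0"
  shows "rnum (Fract n d) * d = n * rden (Fract n d)"
  by (metis assms eq_fract(1) Fract_rnum_rden rden_nonzero)

lemma rden_Fract_dvd:
  assumes "d \<noteq> 0"
  shows "rden (Fract n d) dvd d"
proof -
  have "rden (Fract n d) dvd rnum (Fract n d) * d"
    using rnum_rden_Fract[OF assms] by (metis dvd_triv_right)
  then show ?thesis
    using coprime_rnum_rden by (metis coprime_commute coprime_dvd_mult_right_iff)
qed

lemma poly_rden_Fract_nonzero:
  assumes "d \<noteq> 0" and "poly d c \<noteq> 0"
  shows "poly (rden (Fract n d)) c \<noteq> 0"
  using rden_Fract_dvd[OF assms(1), of n] assms(2) by (metis dvd_def mult_eq_0_iff poly_mult)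

lemma reval_Fract:
  assumes "d \<noteq> 0" and "poly d x \<noteq> 0"
  shows "reval (Fract n d) x = poly n x / poly d x"
proof -
  have "poly (rnum (Fract n d)) x * poly d x = poly n x * poly (rden (Fract n d)) x"
    using arg_cong[OF rnum_rden_Fract[OF assms(1)], of "\<lambda>p. poly p x"] by simp
  then show ?thesis
    unfolding reval_def using poly_rden_Fract_nonzero[OF assms] assms(2) by (simp add: field_simps)
qed

lemma rderiv_Fract:
  assumes d: "d \<noteq> 0"
  shows "rderiv (Fract n d) = Fract (pderiv n * d - n * pderiv d) (d^2)"
proof -
  define n0 d0 where "n0 = rnum (Fract n d)" and "d0 = rden (Fract n d)"
  have cross: "n0 * d = n * d0"
    using rnum_rden_Fract[OF d] by (simp add: n0_def d0_def)
  have "pderiv n0 * d + n0 * pderiv d = pderiv n * d0 + n * pderiv d0"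
    using arg_cong[OF cross, of pderiv] by (simp add: pderiv_mult algebra_simps)
  with cross have "(pderiv n0 * d0 - n0 * pderiv d0) * d^2 = (pderiv n * d - n * pderiv d) * d0^2"
    by algebra
  moreover have "d0 \<noteq> 0" by (simp add: d0_def)
  ultimately show ?thesis
    using d unfolding rderiv_def by (simp add: to_fract_def n0_def d0_def eq_fract)
qed

lemma degree_mult_le_of_le: "degree p \<le> i \<Longrightarrow> degree q \<le> j \<Longrightarrow> degree (p * q) \<le> i + j"
  by (meson add_mono degree_mult_le order_trans)

lemma degree_mult_pderiv_le:
  fixes p Q :: "'a::field_char_0 poly"
  shows "degree (p * pderiv Q) \<le> degree p + degree Q - 1"
proof (cases "pderiv Q = 0")
  case False
  then have "degree Q \<ge> 1" by (simp add: pderiv_eq_0_iff)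
  then show ?thesis
    using degree_mult_le[of p "pderiv Q"] by (simp add: degree_pderiv)
qed simp

lemma pderiv_pcompose_linear: "pderiv (pcompose Q [:c, d:]) = smult d (pcompose (pderiv Q) [:c, d:])"
  by (simp add: pderiv_pcompose pderiv_pCons)

lemma pcompose_shift_eq_0_iff [simp]: "pcompose Q [:c, 1:] = 0 \<longleftrightarrow> Q = (0 :: 'a::idom poly)"
  using pcompose_eq_0[of Q "[:c, 1:]"] by auto

lemma poly_div_gcd_nonzero:
  fixes D p :: "'a::field_gcd poly"
  assumes "D \<noteq> 0" and "poly p c = 0" and sq: "\<not> [:-c, 1:]^2 dvd D"
  shows "poly (D div gcd D p) c \<noteq> 0"
proof
  let ?r = "[:-c, 1:]" and ?g = "gcd D p"
  have D: "D = ?g * (D div ?g)" by simp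
  assume c: "poly (D div ?g) c = 0"
  then have "poly D c = 0" using D by (metis mult_zero_right poly_mult)
  then have "?r dvd ?g" using assms(2) by (simp add: poly_eq_0_iff_dvd)
  moreover have "?r dvd D div ?g" using c by (simp add: poly_eq_0_iff_dvd)
  ultimately have "?r * ?r dvd ?g * (D div ?g)" by (rule mult_dvd_mono)
  then show False using sq D by (simp add: power2_eq_square)
qed

lemma poly_eventually_nonzero_at_infinity:
  fixes p :: "'a::real_normed_field poly"
  assumes "p \<noteq> 0"
  shows "eventually (\<lambda>x. poly p x \<noteq> 0) at_infinity"
proof -
  have "eventually (\<lambda>x. poly p x / x ^ degree p \<noteq> 0) at_infinity"
    by (rule tendsto_imp_eventually_ne[OF poly_divide_tendsto_aux]) (use assms in simp)
  then show ?thesis by eventually_elim auto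
qed

lemma poly_ratio_tendsto_at_infinity:
  fixes N D :: "'a::real_normed_field poly"
  assumes D: "D \<noteq> 0" and deg: "degree N \<le> degree D"
  shows "((\<lambda>x. poly N x / poly D x) \<longlongrightarrow> coeff N (degree D) / lead_coeff D) at_infinity"
proof -
  define c where "c = coeff N (degree D) / lead_coeff D"
  define R where "R = N - smult c D"
  have "((\<lambda>x. poly R x / poly D x) \<longlongrightarrow> 0) at_infinity"
  proof (cases "R = 0")
    case False
    have "degree R \<le> degree D" using deg by (simp add: R_def degree_diff_le)
    moreover have "coeff R (degree D) = 0" using D by (simp add: R_def c_def)
    ultimately have "degree R < degree D"
      using False by (metis le_neq_implies_less leading_coeff_0_iff)
    then show ?thesis by (rule poly_divide_tendsto_0_at_infinity)
  qed simp
  then have "((\<lambda>x. c + poly R x / poly D x) \<longlongrightarrow> c) at_infinity"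
    using tendsto_add[OF tendsto_const] by fastforce
  moreover have "eventually (\<lambda>x. c + poly R x / poly D x = poly N x / poly D x) at_infinity"
    using poly_eventually_nonzero_at_infinity[OF D] by eventually_elim (simp add: R_def field_simps)
  ultimately show ?thesis by (simp add: tendsto_cong c_def)
qed

lemma logderiv_poly_tendsto_degree:
  fixes Q :: "'a::real_normed_field poly"
  assumes "Q \<noteq> 0"
  shows "((\<lambda>x. x * poly (pderiv Q) x / poly Q x) \<longlongrightarrow> of_nat (degree Q)) at_infinity"
proof -
  have "degree (pCons 0 (pderiv Q)) \<le> degree Q"
    by (cases "degree Q") (auto simp: degree_pderiv pderiv_eq_0_iff intro: order_trans[OF degree_pCons_le])
  moreover have "coeff (pCons 0 (pderiv Q)) (degree Q) = of_nat (degree Q) * lead_coeff Q"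
    by (cases "degree Q") (simp_all add: coeff_pderiv)
  ultimately show ?thesis
    using poly_ratio_tendsto_at_infinity[OF assms, of "pCons 0 (pderiv Q)"] assms by simp
qed

lemma recurrence_eq_0_iff:
  fixes c A B :: "nat \<Rightarrow> 'a::idom"
  assumes rec: "\<And>j. j < k \<Longrightarrow> A j * c j + B j * c (Suc j) = 0"
    and A: "\<And>j. j < k \<Longrightarrow> A j \<noteq> 0" and ck: "c k \<noteq> 0" and "n \<le> k"
  shows "c n = 0 \<longleftrightarrow> (\<exists>j. n \<le> j \<and> j < k \<and> B j = 0)"
  using \<open>n \<le> k\<close>
proof (induction n rule: inc_induct)
  case base
  then show ?case using ck by auto
next
  case (step n)
  have "A n * c n = - (B n * c (Suc n))"
    using rec[OF step.hyps(2)] by (simp add: eq_neg_iff_add_eq_0)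
  then have "c n = 0 \<longleftrightarrow> B n = 0 \<or> c (Suc n) = 0"
    using A[OF step.hyps(2)] by auto
  moreover have "(\<exists>j. n \<le> j \<and> j < k \<and> B j = 0) \<longleftrightarrow>
      B n = 0 \<or> (\<exists>j. Suc n \<le> j \<and> j < k \<and> B j = 0)"
    using step.hyps(2) by (metis Suc_leD le_antisym not_less_eq_eq order_refl)
  ultimately show ?case
    using step.IH by blast
qed

lemma recurrence_solution_exists:
  fixes A B :: "nat \<Rightarrow> 'a::field"
  assumes A: "\<And>j. j < k \<Longrightarrow> A j \<noteq> 0"
  obtains c where "c k = 1" and "\<And>j. k < j \<Longrightarrow> c j = 0"
    and "\<And>j. j < k \<Longrightarrow> A j * c j + B j * c (Suc j) = 0"
proof
  define c where "c j = (if j \<le> k then \<Prod>i = j..<k. - B i / A i else 0)" for j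
  show "c k = 1" and "\<And>j. k < j \<Longrightarrow> c j = 0" by (simp_all add: c_def)
  fix j assume "j < k"
  then have "c j = - B j / A j * c (Suc j)"
    by (simp add: c_def prod.atLeast_Suc_lessThan)
  then show "A j * c j + B j * c (Suc j) = 0"
    using A[OF \<open>j < k\<close>] by simp
qed

lemma Ints_add_nonint_neq_0:
  fixes B :: "'a::ring_1"
  assumes "B \<notin> \<int>" and "x \<in> \<int>"
  shows "x + B \<noteq> 0" and "x - B \<noteq> 0"
proof -
  show "x + B \<noteq> 0"
  proof
    assume "x + B = 0"
    then have "B = - x" by (simp add: eq_neg_iff_add_eq_0 add.commute)
    then show False using assms by simp
  qed
  show "x - B \<noteq> 0" using assms by auto
qed

lemma Ints_add_mult_nonint_eq_0_iff:
  fixes B :: "'a::ring_char_0"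
  assumes "B \<notin> \<int>" and "\<bar>m\<bar> \<le> 1"
  shows "of_int n + of_int m * B = 0 \<longleftrightarrow> n = 0 \<and> m = 0"
proof -
  have "m = 0 \<or> m = 1 \<or> m = -1" using assms(2) by auto
  then show ?thesis
  proof (elim disjE)
    assume "m = 1"
    then show ?thesis using Ints_add_nonint_neq_0(1)[OF assms(1), of "of_int n"] by simp
  next
    assume "m = -1"
    then show ?thesis using Ints_add_nonint_neq_0(2)[OF assms(1), of "of_int n"] by simp
  qed simp
qed

section \<open>Rational solutions of a Riccati equation\<close>

lemma Fract_mem_Ric_iff:
  assumes d: "d \<noteq> 0"
  shows "Fract n d \<in> Ric (p, q, r) ev \<longleftrightarrow>
    p * (pderiv n * d - n * pderiv d + n^2) + q * n * d + r * d^2 = [:ev:] * d^2"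
proof -
  have "to_fract p * (rderiv (Fract n d) + (Fract n d)^2) + to_fract q * Fract n d + to_fract r
     = Fract (p * (pderiv n * d - n * pderiv d + n^2) + q * n * d + r * d^2) (d^2)"
    using d by (simp add: rderiv_Fract to_fract_def power2_eq_square eq_fract algebra_simps)
  then show ?thesis
    using d by (simp add: Ric_def to_fract_def eq_fract mult.commute)
qed

text \<open>The Riccati equation for w = (p Q' + m Q) / (p Q), cleared of the common factor p Q.\<close>

definition reduced_eq ::
    "complex poly \<Rightarrow> complex poly \<Rightarrow> complex poly \<Rightarrow> complex \<Rightarrow> complex poly \<Rightarrow> complex poly \<Rightarrow> bool" where
  "reduced_eq p q r ev m Q \<longleftrightarrow>
     p * (p * pderiv (pderiv Q) + (2 * m + q) * pderiv Q)
     + (pderiv m * p - m * pderiv p + m^2 + q * m + r * p) * Q = [:ev:] * p * Q"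

lemma gauge_Fract_mem_Ric_iff:
  assumes p: "p \<noteq> 0" and Q: "Q \<noteq> 0"
  shows "Fract (p * pderiv Q + m * Q) (p * Q) \<in> Ric (p, q, r) ev \<longleftrightarrow> reduced_eq p q r ev m Q"
proof -
  let ?n = "p * pderiv Q + m * Q" and ?d = "p * Q"
  let ?L = "p * (p * pderiv (pderiv Q) + (2 * m + q) * pderiv Q)
     + (pderiv m * p - m * pderiv p + m^2 + q * m + r * p) * Q"
  have "Fract ?n ?d \<in> Ric (p, q, r) ev \<longleftrightarrow>
      p * (pderiv ?n * ?d - ?n * pderiv ?d + ?n^2) + q * ?n * ?d + r * ?d^2 = [:ev:] * ?d^2"
    using p Q by (intro Fract_mem_Ric_iff) simp
  also have "\<dots> \<longleftrightarrow> (p * Q) * (?L - [:ev:] * p * Q) = 0"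
  proof -
    have "p * (pderiv ?n * ?d - ?n * pderiv ?d + ?n^2) + q * ?n * ?d + r * ?d^2 - [:ev:] * ?d^2
       = (p * Q) * (?L - [:ev:] * p * Q)"
      by (simp add: pderiv_mult pderiv_add power2_eq_square algebra_simps)
    then show ?thesis by (metis eq_iff_diff_eq_0)
  qed
  also have "\<dots> \<longleftrightarrow> reduced_eq p q r ev m Q"
    using p Q by (simp add: reduced_eq_def)
  finally show ?thesis .
qed

lemma rden_dvd_Ric:
  assumes "w \<in> Ric (p, q, r) ev"
  shows "rden w dvd p * (rnum w - pderiv (rden w))"
proof -
  define N D where "N = rnum w" and "D = rden w"
  have "p * (pderiv N * D - N * pderiv D + N^2) + q * N * D + r * D^2 = [:ev:] * D^2"
    using assms Fract_mem_Ric_iff[of D N p q r ev] by (simp add: N_def D_def Fract_rnum_rden)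
  then have "N * (p * (N - pderiv D)) = D * ([:ev:] * D - p * pderiv N - q * N - r * D)"
    by (simp add: algebra_simps power2_eq_square)
  then have "D dvd N * (p * (N - pderiv D))"
    by (metis dvd_triv_left)
  then show ?thesis
    using coprime_rnum_rden by (simp add: N_def D_def coprime_commute coprime_dvd_mult_right_iff)
qed

text \<open>Poles of a rational solution at simple zeros of the leading coefficient are simple.\<close>

lemma square_not_dvd_at_simple_root:
  fixes N D s :: "complex poly"
  assumes cop: "coprime N D" and dvd: "D dvd p * (N - pderiv D)"
    and p: "p = [:-c, 1:] * s" and s: "poly s c \<noteq> 0"
  shows "\<not> [:-c, 1:]^2 dvd D"
proof
  define r where "r = [:-c, 1:]"
  assume "r^2 dvd D"
  then obtain D1 where D1: "D = r^2 * D1" by blast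
  obtain K where K: "p * (N - pderiv D) = D * K" using dvd by blast
  have "pderiv r = 1" by (simp add: r_def pderiv_pCons)
  then have "pderiv D = r * (2 * D1 + r * pderiv D1)"
    unfolding D1 by (simp add: pderiv_mult power2_eq_square algebra_simps)
  then have D'c: "poly (pderiv D) c = 0" by (simp add: r_def)
  have "r \<noteq> 0" by (simp add: r_def)
  moreover have "r * (s * (N - pderiv D)) = r * (r * D1 * K)"
    using K D1 p by (simp add: r_def[symmetric] power2_eq_square algebra_simps)
  ultimately have "poly (s * (N - pderiv D)) c = poly (r * D1 * K) c" by simp
  then have "poly N c = 0" using s D'c by (simp add: r_def)
  then have "r dvd N" by (simp add: r_def poly_eq_0_iff_dvd)
  moreover have "r dvd D" using D1 by (simp add: power2_eq_square)
  ultimately have "is_unit r" using cop coprime_common_divisor by blast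
  then show False by (simp add: r_def is_unit_iff_degree)
qed

text \<open>The Fuchsian condition at infinity.\<close>

lemma reduced_eq_degree_le:
  assumes eq: "reduced_eq p q r ev m Q" and Q: "Q \<noteq> 0"
    and p: "degree p \<le> 2" and q: "degree q \<le> 1" and r: "degree r = 0"
  shows "degree m \<le> 1"
proof (rule ccontr)
  define k d where "k = degree Q" and "d = degree m"
  assume "\<not> degree m \<le> 1"
  then have d: "d \<ge> 2" "m \<noteq> 0" by (auto simp: d_def)
  have "Q * m^2 = [:ev:] * p * Q - p * (p * pderiv (pderiv Q)) - p * ((2 * m + q) * pderiv Q)
      - (pderiv m * p - m * pderiv p + q * m + r * p) * Q"
    using eq by (simp add: reduced_eq_def algebra_simps)
  moreover have "degree ([:ev:] * p * Q - p * (p * pderiv (pderiv Q)) - p * ((2 * m + q) * pderiv Q)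
      - (pderiv m * p - m * pderiv p + q * m + r * p) * Q) \<le> k + d + 1"
  proof (intro degree_diff_le)
    show "degree ([:ev:] * p * Q) \<le> k + d + 1"
      using degree_mult_le_of_le[OF degree_mult_le_of_le[OF _ p] order.refl, of "[:ev:]" 0 Q] d
      by (simp add: k_def)
    have "degree (p * pderiv (pderiv Q)) \<le> degree p + degree (pderiv Q) - 1"
      by (rule degree_mult_pderiv_le)
    then have "degree (p * pderiv (pderiv Q)) \<le> k + 1"
      using p by (simp add: degree_pderiv k_def)
    then show "degree (p * (p * pderiv (pderiv Q))) \<le> k + d + 1"
      using degree_mult_le_of_le[OF p] d by fastforce
    have "degree (2 * m + q) \<le> d"
      using degree_mult_le_of_le[of 2 0 m d] q d by (intro degree_add_le) (auto simp: d_def)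
    then have "degree ((2 * m + q) * pderiv Q) \<le> d + k - 1"
      using degree_mult_pderiv_le[of "2 * m + q" Q] by (simp add: k_def)
    then show "degree (p * ((2 * m + q) * pderiv Q)) \<le> k + d + 1"
      using degree_mult_le_of_le[OF p] d by fastforce
    have "degree (pderiv m * p - m * pderiv p + q * m + r * p) \<le> d + 1"
    proof (intro degree_add_le degree_diff_le)
      show "degree (pderiv m * p) \<le> d + 1"
        using degree_mult_pderiv_le[of p m] p d by (simp add: mult.commute d_def)
      show "degree (m * pderiv p) \<le> d + 1"
        using p by (intro degree_mult_le_of_le) (auto simp: d_def degree_pderiv)
      show "degree (q * m) \<le> d + 1"
        using degree_mult_le_of_le[OF q, of m d] by (simp add: d_def)
      show "degree (r * p) \<le> d + 1"
        using degree_mult_le_of_le[of r 0 p 2] r p d by simp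
    qed
    then show "degree ((pderiv m * p - m * pderiv p + q * m + r * p) * Q) \<le> k + d + 1"
      using degree_mult_le_of_le[of _ "d + 1" Q k] by (simp add: k_def add.commute)
  qed
  moreover have "degree (Q * m^2) = k + 2 * d"
    using Q d by (simp add: degree_mult_eq degree_power_eq k_def d_def)
  ultimately show False using d by simp
qed

lemma has_pole_at_gauge_Fract_iff:
  assumes Q: "Q \<noteq> 0" "poly Q c \<noteq> 0" and p: "p = [:-c, 1:] * s" "poly s c \<noteq> 0"
  shows "has_pole_at (Fract (p * pderiv Q + m * Q) (p * Q)) c \<longleftrightarrow> poly m c \<noteq> 0"
proof
  assume pole: "has_pole_at (Fract (p * pderiv Q + m * Q) (p * Q)) c"
  show "poly m c \<noteq> 0"
  proof
    assume "poly m c = 0"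
    then obtain m1 where m1: "m = [:-c, 1:] * m1" by (metis poly_eq_0_iff_dvd dvdE)
    have "s \<noteq> 0" using p(2) by auto
    have "Fract (p * pderiv Q + m * Q) (p * Q) = Fract ([:-c, 1:] * (s * pderiv Q + m1 * Q)) ([:-c, 1:] * (s * Q))"
      unfolding p(1) m1 by (simp add: algebra_simps)
    also have "\<dots> = Fract (s * pderiv Q + m1 * Q) (s * Q)"
      by (rule mult_fract_cancel) simp
    finally show False
      using pole poly_rden_Fract_nonzero[of "s * Q" c] \<open>s \<noteq> 0\<close> Q p(2)
      by (simp add: has_pole_at_def)
  qed
next
  assume m: "poly m c \<noteq> 0"
  have "s \<noteq> 0" using p(2) by auto
  then have "p \<noteq> 0" using p(1) by (metis mult_eq_0_iff pCons_eq_0_iff zero_neq_one)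
  have "poly (rnum (Fract (p * pderiv Q + m * Q) (p * Q)) * (p * Q)) c
      = poly ((p * pderiv Q + m * Q) * rden (Fract (p * pderiv Q + m * Q) (p * Q))) c"
    using rnum_rden_Fract[of "p * Q"] \<open>p \<noteq> 0\<close> Q(1) by simp
  then show "has_pole_at (Fract (p * pderiv Q + m * Q) (p * Q)) c"
    using m Q(2) p(1) by (simp add: has_pole_at_def)
qed

section \<open>Rational solutions of the Jacobi Riccati equation\<close>

definition jacobi_p :: "complex poly" where
  "jacobi_p = [:-1, 0, 1:]"

definition jacobi_q :: "complex \<Rightarrow> complex \<Rightarrow> complex poly" where
  "jacobi_q \<alpha> \<beta> = [:\<alpha> - \<beta>, \<alpha> + \<beta> + 2:]"

lemma jacobiT_eq: "jacobiT A B = (jacobi_p, jacobi_q A B, 0)"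
  by (simp add: jacobiT_def jacobi_p_def jacobi_q_def)

lemma jacobi_p_nonzero [simp]: "jacobi_p \<noteq> 0"
  by (simp add: jacobi_p_def)

text \<open>Both factorisations have the shape [:-c, 1:] * s required by the lemmas on simple roots.\<close>

lemma jacobi_p_factors: "jacobi_p = [:-1, 1:] * [:- (-1), 1:]" "jacobi_p = [:- (-1), 1:] * [:-1, 1:]"
  by (simp_all add: jacobi_p_def)

lemma coprime_jacobi_p:
  assumes "poly Q 1 \<noteq> 0" and "poly Q (-1) \<noteq> 0"
  shows "coprime Q jacobi_p"
proof -
  have "coprime Q [:-c, 1:]" if "poly Q c \<noteq> 0" for c
    using that prime_elem_linear_field_poly[of 1 "-c"] prime_elem_imp_coprime poly_eq_0_iff_dvd
    by (metis coprime_commute one_neq_zero)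
  then have "coprime Q ([:-1, 1:] * [:- (-1), 1:])"
    unfolding coprime_mult_right_iff using assms by blast
  then show ?thesis by (simp only: jacobi_p_factors(1))
qed

lemma Ric_jacobi_p_gauge_form:
  assumes w: "w \<in> Ric (jacobi_p, q, r) ev"
  obtains Q m where "Q \<noteq> 0" "poly Q 1 \<noteq> 0" "poly Q (-1) \<noteq> 0"
    "w = Fract (jacobi_p * pderiv Q + m * Q) (jacobi_p * Q)" "reduced_eq jacobi_p q r ev m Q"
proof -
  define N D where "N = rnum w" and "D = rden w"
  define g where "g = gcd D jacobi_p"
  define Q F where "Q = D div g" and "F = jacobi_p div g"
  have dvd: "D dvd jacobi_p * (N - pderiv D)"
    using rden_dvd_Ric[OF w] by (simp add: N_def D_def)
  have cop: "coprime N D" by (simp add: N_def D_def coprime_rnum_rden)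
  have DgQ: "D = g * Q" and pgF: "jacobi_p = g * F" by (simp_all add: g_def Q_def F_def)
  have "D \<noteq> 0" by (simp add: D_def)
  then have Q0: "Q \<noteq> 0" and F0: "F \<noteq> 0" using DgQ pgF by auto
  have Q1: "poly Q 1 \<noteq> 0"
    using poly_div_gcd_nonzero[OF \<open>D \<noteq> 0\<close> _ square_not_dvd_at_simple_root[OF cop dvd jacobi_p_factors(1)]]
    by (simp add: Q_def g_def jacobi_p_def)
  have Q2: "poly Q (-1) \<noteq> 0"
    using poly_div_gcd_nonzero[OF \<open>D \<noteq> 0\<close> _ square_not_dvd_at_simple_root[OF cop dvd jacobi_p_factors(2)]]
    by (simp add: Q_def g_def jacobi_p_def)
  have "Q dvd jacobi_p * (N - pderiv D)"
    using dvd DgQ by (metis dvd_mult_right dvd_trans)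
  then have "Q dvd N - pderiv D"
    using coprime_jacobi_p[OF Q1 Q2] by (simp add: coprime_dvd_mult_right_iff)
  moreover have "N - pderiv D = (N - g * pderiv Q) - pderiv g * Q"
    unfolding DgQ by (simp add: pderiv_mult algebra_simps)
  ultimately have "Q dvd N - g * pderiv Q"
    by (metis dvd_add_left_iff dvd_triv_right diff_add_cancel)
  then have "Q dvd F * N - jacobi_p * pderiv Q"
    using dvd_mult[of Q "N - g * pderiv Q" F] by (simp add: pgF right_diff_distrib ac_simps)
  then obtain m where "F * N - jacobi_p * pderiv Q = Q * m" by (elim dvdE)
  then have m: "F * N = jacobi_p * pderiv Q + m * Q" by (simp add: diff_eq_eq mult.commute)
  have "w = Fract N D" by (simp add: N_def D_def Fract_rnum_rden)
  also have "\<dots> = Fract (F * N) (F * D)"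
    using F0 \<open>D \<noteq> 0\<close> by (simp add: eq_fract)
  also have "F * D = jacobi_p * Q" using DgQ pgF by (simp add: algebra_simps)
  finally have "w = Fract (jacobi_p * pderiv Q + m * Q) (jacobi_p * Q)" by (simp only: m)
  moreover from this have "reduced_eq jacobi_p q r ev m Q"
    using w gauge_Fract_mem_Ric_iff[OF jacobi_p_nonzero Q0] by simp
  ultimately show ?thesis using that Q0 Q1 Q2 by blast
qed

text \<open>The gauge e1 (x + 1) + e2 (x - 1), i.e. m with m / jacobi_p = e1 / (x - 1) + e2 / (x + 1).\<close>

definition gauge_poly :: "complex \<Rightarrow> complex \<Rightarrow> complex poly" where
  "gauge_poly e1 e2 = [:e1 - e2, e1 + e2:]"

text \<open>The logarithmic derivative of (x - 1)^e1 (x + 1)^e2 Q(x).\<close>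

definition qr_logderiv :: "complex \<Rightarrow> complex \<Rightarrow> complex poly \<Rightarrow> rfun" where
  "qr_logderiv e1 e2 Q = Fract (jacobi_p * pderiv Q + gauge_poly e1 e2 * Q) (jacobi_p * Q)"

definition jacobi_op :: "complex \<Rightarrow> complex \<Rightarrow> complex poly \<Rightarrow> complex poly" where
  "jacobi_op \<alpha> \<beta> Q = jacobi_p * pderiv (pderiv Q) + jacobi_q \<alpha> \<beta> * pderiv Q"

lemma linear_poly_eq_gauge:
  assumes "degree m \<le> 1"
  shows "m = gauge_poly (poly m 1 / 2) (- poly m (-1) / 2)"
proof -
  have "m = [:coeff m 0, coeff m 1:]"
    using assms by (intro poly_eqI) (auto simp: coeff_pCons coeff_eq_0 split: nat.split)
  then obtain c0 c1 where "m = [:c0, c1:]" by blast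
  then show ?thesis
    by (simp add: gauge_poly_def field_simps)
qed

lemma reduced_eq_indicial:
  assumes eq: "reduced_eq jacobi_p (jacobi_q A B) 0 ev (gauge_poly e1 e2) Q"
  shows "poly Q 1 \<noteq> 0 \<Longrightarrow> e1 * (e1 + A) = 0"
    and "poly Q (-1) \<noteq> 0 \<Longrightarrow> e2 * (e2 + B) = 0"
proof -
  have "poly Q 1 * (4 * e1 * (e1 + A)) = 0" and "poly Q (-1) * (4 * e2 * (e2 + B)) = 0"
    using arg_cong[OF eq[unfolded reduced_eq_def], of "\<lambda>P. poly P 1"]
      arg_cong[OF eq[unfolded reduced_eq_def], of "\<lambda>P. poly P (-1)"]
    by (simp_all add: jacobi_p_def jacobi_q_def gauge_poly_def pderiv_pCons power2_eq_square algebra_simps)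
  then show "poly Q 1 \<noteq> 0 \<Longrightarrow> e1 * (e1 + A) = 0" and "poly Q (-1) \<noteq> 0 \<Longrightarrow> e2 * (e2 + B) = 0"
    by simp_all
qed

lemma gauge_poly_jacobi_q: "2 * gauge_poly e1 e2 + jacobi_q A B = jacobi_q (A + 2 * e1) (B + 2 * e2)"
  by (simp add: gauge_poly_def jacobi_q_def numeral_poly algebra_simps)

lemma gauge_poly_riccati_term:
  "pderiv (gauge_poly e1 e2) * jacobi_p - gauge_poly e1 e2 * pderiv jacobi_p + (gauge_poly e1 e2)^2
     + jacobi_q A B * gauge_poly e1 e2
   = smult (lam 1 (e1 + e2) A B) jacobi_p
     + smult 2 [:e1 * (e1 + A) + e2 * (e2 + B), e1 * (e1 + A) - e2 * (e2 + B):]"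
  by (simp add: gauge_poly_def jacobi_p_def jacobi_q_def lam_def pderiv_pCons power2_eq_square algebra_simps)

lemma reduced_eq_gauge_iff:
  assumes "e1 * (e1 + A) = 0" and "e2 * (e2 + B) = 0"
  shows "reduced_eq jacobi_p (jacobi_q A B) 0 ev (gauge_poly e1 e2) Q \<longleftrightarrow>
    jacobi_op (A + 2 * e1) (B + 2 * e2) Q = smult (ev - lam 1 (e1 + e2) A B) Q"
proof -
  let ?J = "jacobi_op (A + 2 * e1) (B + 2 * e2) Q" and ?\<kappa> = "lam 1 (e1 + e2) A B"
  have R: "pderiv (gauge_poly e1 e2) * jacobi_p - gauge_poly e1 e2 * pderiv jacobi_p
      + (gauge_poly e1 e2)^2 + jacobi_q A B * gauge_poly e1 e2 = smult ?\<kappa> jacobi_p"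
    using gauge_poly_riccati_term[of e1 e2 A B] assms by simp
  have "reduced_eq jacobi_p (jacobi_q A B) 0 ev (gauge_poly e1 e2) Q \<longleftrightarrow>
      jacobi_p * ?J + smult ?\<kappa> jacobi_p * Q = [:ev:] * jacobi_p * Q"
    unfolding reduced_eq_def gauge_poly_jacobi_q mult_zero_left add_0_right R jacobi_op_def ..
  also have "\<dots> \<longleftrightarrow> jacobi_p * (?J - smult (ev - ?\<kappa>) Q) = 0"
    by (simp add: algebra_simps smult_diff_left eq_iff_diff_eq_0[of "jacobi_p * ?J + _"])
  finally show ?thesis by simp
qed

theorem Ric_jacobiT_iff:
  "w \<in> Ric (jacobiT A B) ev \<longleftrightarrow>
    (\<exists>e1 e2 Q. e1 * (e1 + A) = 0 \<and> e2 * (e2 + B) = 0 \<and>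
      Q \<noteq> 0 \<and> poly Q 1 \<noteq> 0 \<and> poly Q (-1) \<noteq> 0 \<and> w = qr_logderiv e1 e2 Q \<and>
      jacobi_op (A + 2 * e1) (B + 2 * e2) Q = smult (ev - lam 1 (e1 + e2) A B) Q)"
  (is "_ \<longleftrightarrow> ?rhs")
proof
  assume w: "w \<in> Ric (jacobiT A B) ev"
  obtain Q m where Q: "Q \<noteq> 0" "poly Q 1 \<noteq> 0" "poly Q (-1) \<noteq> 0"
    and wQ: "w = Fract (jacobi_p * pderiv Q + m * Q) (jacobi_p * Q)"
    and eq: "reduced_eq jacobi_p (jacobi_q A B) 0 ev m Q"
    using Ric_jacobi_p_gauge_form w unfolding jacobiT_eq by metis
  define e1 e2 where "e1 = poly m 1 / 2" and "e2 = - poly m (-1) / 2"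
  have "degree m \<le> 1"
    using reduced_eq_degree_le[OF eq Q(1)] by (simp add: jacobi_p_def jacobi_q_def)
  then have m: "m = gauge_poly e1 e2"
    unfolding e1_def e2_def by (rule linear_poly_eq_gauge)
  have ind: "e1 * (e1 + A) = 0" "e2 * (e2 + B) = 0"
    using reduced_eq_indicial[OF eq[unfolded m]] Q by simp_all
  show ?rhs
    using Q ind eq reduced_eq_gauge_iff[OF ind] wQ
    by (intro exI[of _ e1] exI[of _ e2] exI[of _ Q]) (simp add: m qr_logderiv_def)
next
  assume ?rhs
  then obtain e1 e2 Q where ind: "e1 * (e1 + A) = 0" "e2 * (e2 + B) = 0" and "Q \<noteq> 0"
    and "w = qr_logderiv e1 e2 Q"
    and "jacobi_op (A + 2 * e1) (B + 2 * e2) Q = smult (ev - lam 1 (e1 + e2) A B) Q"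
    by blast
  then show "w \<in> Ric (jacobiT A B) ev"
    unfolding jacobiT_eq qr_logderiv_def
    using gauge_Fract_mem_Ric_iff reduced_eq_gauge_iff[OF ind] by simp
qed

lemma has_pole_at_qr_logderiv_iff:
  assumes "Q \<noteq> 0" "poly Q 1 \<noteq> 0" "poly Q (-1) \<noteq> 0"
  shows "has_pole_at (qr_logderiv e1 e2 Q) 1 \<longleftrightarrow> e1 \<noteq> 0"
    and "has_pole_at (qr_logderiv e1 e2 Q) (-1) \<longleftrightarrow> e2 \<noteq> 0"
  using has_pole_at_gauge_Fract_iff[OF assms(1,2) jacobi_p_factors(1), of "gauge_poly e1 e2"]
    has_pole_at_gauge_Fract_iff[OF assms(1,3) jacobi_p_factors(2), of "gauge_poly e1 e2"]
  by (simp_all add: qr_logderiv_def gauge_poly_def)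

lemma qr_degree_qr_logderiv:
  assumes Q: "Q \<noteq> 0"
  shows "qr_degree (qr_logderiv e1 e2 Q) = of_nat (degree Q) + (e1 + e2)"
proof -
  have "((\<lambda>x. x * poly (gauge_poly e1 e2) x / poly jacobi_p x) \<longlongrightarrow> e1 + e2) at_infinity"
    using poly_ratio_tendsto_at_infinity[of jacobi_p "pCons 0 (gauge_poly e1 e2)"]
    by (simp add: jacobi_p_def gauge_poly_def)
  with logderiv_poly_tendsto_degree[OF Q]
  have "((\<lambda>x. x * poly (pderiv Q) x / poly Q x + x * poly (gauge_poly e1 e2) x / poly jacobi_p x)
      \<longlongrightarrow> of_nat (degree Q) + (e1 + e2)) at_infinity"
    by (rule tendsto_add)
  moreover have "eventually (\<lambda>x. x * poly (pderiv Q) x / poly Q x + x * poly (gauge_poly e1 e2) x / poly jacobi_p x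
      = x * reval (qr_logderiv e1 e2 Q) x) at_infinity"
    using poly_eventually_nonzero_at_infinity[of "jacobi_p * Q"] Q
    by (auto elim!: eventually_mono simp: qr_logderiv_def reval_Fract field_simps)
  ultimately show ?thesis
    unfolding qr_degree_def by (intro tendsto_Lim) (simp_all add: tendsto_cong trivial_limit_at_infinity)
qed

lemma qr_logderiv_smult:
  assumes "c \<noteq> 0"
  shows "qr_logderiv e1 e2 (smult c Q) = qr_logderiv e1 e2 Q"
proof -
  have "qr_logderiv e1 e2 (smult c Q)
      = Fract ([:c:] * (jacobi_p * pderiv Q + gauge_poly e1 e2 * Q)) ([:c:] * (jacobi_p * Q))"
    by (simp add: qr_logderiv_def pderiv_smult algebra_simps)
  also have "\<dots> = qr_logderiv e1 e2 Q"
    unfolding qr_logderiv_def by (rule mult_fract_cancel) (simp add: assms)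
  finally show ?thesis .
qed

section \<open>Polynomial eigenfunctions of the Jacobi operator\<close>

text \<open>The operator (x^2 + s x) D^2 + (u x + v) D has a regular singular point at 0, so it acts
  on coefficients by a two-term recurrence.\<close>

definition hypergeometric_op :: "'a::idom \<Rightarrow> 'a \<Rightarrow> 'a \<Rightarrow> 'a poly \<Rightarrow> 'a poly" where
  "hypergeometric_op s u v P = [:0, s, 1:] * pderiv (pderiv P) + [:v, u:] * pderiv P"

lemma coeff_hypergeometric_op:
  "coeff (hypergeometric_op s u v P) j =
     (of_nat j * (of_nat j - 1) + u * of_nat j) * coeff P j
     + of_nat (Suc j) * (s * of_nat j + v) * coeff P (Suc j)"
proof (cases j)
  case (Suc i)
  then show ?thesis
    by (cases i) (simp_all add: hypergeometric_op_def coeff_pderiv algebra_simps)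
qed (simp add: hypergeometric_op_def coeff_pderiv algebra_simps)

lemma hypergeometric_op_eigen_iff:
  "hypergeometric_op s u v P = smult \<mu> P \<longleftrightarrow>
    (\<forall>j. (of_nat j * (of_nat j - 1) + u * of_nat j - \<mu>) * coeff P j
       + of_nat (Suc j) * (s * of_nat j + v) * coeff P (Suc j) = 0)"
  unfolding poly_eq_iff coeff_hypergeometric_op coeff_smult by (simp add: algebra_simps)

lemma jacobi_op_shift:
  "pcompose (jacobi_op \<alpha> \<beta> Q) [:1, 1:]
    = hypergeometric_op 2 (\<alpha> + \<beta> + 2) (2 * \<alpha> + 2) (pcompose Q [:1, 1:])"
  by (rule poly_ext)
    (simp add: jacobi_op_def hypergeometric_op_def jacobi_p_def jacobi_q_def
      pderiv_pcompose_linear poly_pcompose algebra_simps)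

lemma jacobi_op_reflect:
  "pcompose (jacobi_op \<alpha> \<beta> Q) [:0, -1:] = jacobi_op \<beta> \<alpha> (pcompose Q [:0, -1:])"
  by (rule poly_ext)
    (simp add: jacobi_op_def jacobi_p_def jacobi_q_def pderiv_pcompose_linear pderiv_minus
      poly_pcompose algebra_simps)

lemma jacobi_op_smult: "jacobi_op \<alpha> \<beta> (smult c P) = smult c (jacobi_op \<alpha> \<beta> P)"
  by (simp add: jacobi_op_def pderiv_smult smult_add_right algebra_simps)

lemma jacobi_op_diff: "jacobi_op \<alpha> \<beta> (P - R) = jacobi_op \<alpha> \<beta> P - jacobi_op \<alpha> \<beta> R"
  by (simp add: jacobi_op_def pderiv_diff algebra_simps)

lemma jacobi_shift_eigen_iff:
  "jacobi_op \<alpha> \<beta> Q = smult \<mu> Q \<longleftrightarrow>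
    (\<forall>j. (of_nat j * (of_nat j - 1) + (\<alpha> + \<beta> + 2) * of_nat j - \<mu>) * coeff (pcompose Q [:1, 1:]) j
       + 2 * of_nat (Suc j) * (of_nat j + \<alpha> + 1) * coeff (pcompose Q [:1, 1:]) (Suc j) = 0)"
proof -
  have "jacobi_op \<alpha> \<beta> Q = smult \<mu> Q \<longleftrightarrow>
      pcompose (jacobi_op \<alpha> \<beta> Q) [:1, 1:] = pcompose (smult \<mu> Q) [:1, 1:]"
    using pcompose_shift_eq_0_iff[of "jacobi_op \<alpha> \<beta> Q - smult \<mu> Q" 1]
    by (simp add: pcompose_diff)
  also have "\<dots> \<longleftrightarrow> hypergeometric_op 2 (\<alpha> + \<beta> + 2) (2 * \<alpha> + 2) (pcompose Q [:1, 1:])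
      = smult \<mu> (pcompose Q [:1, 1:])"
    by (simp add: jacobi_op_shift pcompose_smult)
  finally show ?thesis
    unfolding hypergeometric_op_eigen_iff by (simp add: algebra_simps)
qed

definition jacobi_eigenpoly :: "complex \<Rightarrow> complex \<Rightarrow> nat \<Rightarrow> complex poly \<Rightarrow> bool" where
  "jacobi_eigenpoly \<alpha> \<beta> k Q \<longleftrightarrow> Q \<noteq> 0 \<and> degree Q = k \<and>
     jacobi_op \<alpha> \<beta> Q = smult (of_nat k * (of_nat k + \<alpha> + \<beta> + 1)) Q"

lemma jacobi_eigenvalue_factor:
  "of_nat j * (of_nat j - 1) + (\<alpha> + \<beta> + 2) * of_nat j - of_nat k * (of_nat k + \<alpha> + \<beta> + 1)
     = (of_nat j - of_nat k) * (of_nat (j + k) + \<alpha> + \<beta> + (1 :: complex))"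
  by (simp add: algebra_simps)

lemma jacobi_op_eigenvalue:
  assumes J: "jacobi_op \<alpha> \<beta> Q = smult \<mu> Q" and Q: "Q \<noteq> 0"
  shows "\<mu> = of_nat (degree Q) * (of_nat (degree Q) + \<alpha> + \<beta> + 1)"
proof -
  let ?P = "pcompose Q [:1, 1:]" and ?k = "degree Q"
  have "degree ?P = ?k" by (simp add: degree_pcompose)
  moreover have "?P \<noteq> 0" using Q by simp
  ultimately have "coeff ?P (Suc ?k) = 0" and "coeff ?P ?k \<noteq> 0"
    by (metis coeff_eq_0 lessI, metis leading_coeff_0_iff)
  moreover have "(of_nat ?k * (of_nat ?k - 1) + (\<alpha> + \<beta> + 2) * of_nat ?k - \<mu>) * coeff ?P ?k
      + 2 * of_nat (Suc ?k) * (of_nat ?k + \<alpha> + 1) * coeff ?P (Suc ?k) = 0"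
    using J jacobi_shift_eigen_iff by blast
  ultimately have "\<mu> = of_nat ?k * (of_nat ?k - 1) + (\<alpha> + \<beta> + 2) * of_nat ?k"
    by simp
  then show ?thesis by (simp add: algebra_simps)
qed

lemma jacobi_eigenpoly_degree:
  "Q \<noteq> 0 \<Longrightarrow> jacobi_op \<alpha> \<beta> Q = smult \<mu> Q \<Longrightarrow> jacobi_eigenpoly \<alpha> \<beta> (degree Q) Q"
  using jacobi_op_eigenvalue by (simp add: jacobi_eigenpoly_def)

lemma jacobi_eigenpoly_shift_recurrence:
  assumes "jacobi_eigenpoly \<alpha> \<beta> k Q"
  shows "(of_nat j - of_nat k) * (of_nat (j + k) + \<alpha> + \<beta> + 1) * coeff (pcompose Q [:1, 1:]) j
     + 2 * of_nat (Suc j) * (of_nat j + \<alpha> + 1) * coeff (pcompose Q [:1, 1:]) (Suc j) = 0"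
  using assms jacobi_shift_eigen_iff[of \<alpha> \<beta> Q] unfolding jacobi_eigenpoly_def
  by (simp only: jacobi_eigenvalue_factor)

text \<open>The nondegeneracy hypothesis says that k (k + \<alpha> + \<beta> + 1) differs from j (j + \<alpha> + \<beta> + 1)
  for all j < k.\<close>

lemma jacobi_eigenpoly_exists:
  assumes nd: "\<And>j. j < k \<Longrightarrow> of_nat (j + k) + \<alpha> + \<beta> + 1 \<noteq> (0 :: complex)"
  obtains Q where "jacobi_eigenpoly \<alpha> \<beta> k Q"
proof -
  define A B where "A j = (of_nat j - of_nat k) * (of_nat (j + k) + \<alpha> + \<beta> + (1 :: complex))"
    and "B j = 2 * of_nat (Suc j) * (of_nat j + \<alpha> + (1 :: complex))" for j
  have "A j \<noteq> 0" if "j < k" for j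
    using nd[OF that] that by (simp add: A_def)
  then obtain c where ck: "c k = 1" and c0: "\<And>j. k < j \<Longrightarrow> c j = 0"
    and rec: "\<And>j. j < k \<Longrightarrow> A j * c j + B j * c (Suc j) = 0"
    using recurrence_solution_exists by metis
  define P where "P = Abs_poly c"
  have cP: "coeff P = c"
    unfolding P_def using c0 by (subst Abs_poly_inverse) (auto simp: MOST_nat)
  have "A j * coeff P j + B j * coeff P (Suc j) = 0" for j
    using rec[of j] c0[of j] c0[of "Suc j"] by (cases "j < k") (auto simp: cP A_def)
  moreover have "degree P = k"
    using ck c0 cP by (metis degree_le le_antisym le_degree not_le one_neq_zero)
  moreover define Q where "Q = pcompose P [:-1, 1:]"
  moreover have "pcompose Q [:1, 1:] = P"
    by (simp add: Q_def pcompose_assoc[symmetric] pcompose_pCons)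
  ultimately have "jacobi_op \<alpha> \<beta> Q = smult (of_nat k * (of_nat k + \<alpha> + \<beta> + 1)) Q"
    and "degree Q = k" and "Q \<noteq> 0"
    using ck cP unfolding jacobi_shift_eigen_iff jacobi_eigenvalue_factor A_def B_def
    by (auto simp: degree_pcompose algebra_simps)
  then show ?thesis using that by (simp add: jacobi_eigenpoly_def)
qed

lemma jacobi_eigenpoly_unique:
  assumes nd: "\<And>j. j < k \<Longrightarrow> of_nat (j + k) + \<alpha> + \<beta> + 1 \<noteq> (0 :: complex)"
    and Q1: "jacobi_eigenpoly \<alpha> \<beta> k Q1" and Q2: "jacobi_eigenpoly \<alpha> \<beta> k Q2"
  shows "Q2 = smult (lead_coeff Q2 / lead_coeff Q1) Q1"
proof -
  define R where "R = smult (lead_coeff Q1) Q2 - smult (lead_coeff Q2) Q1"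
  define \<mu> where "\<mu> = of_nat k * (of_nat k + \<alpha> + \<beta> + (1 :: complex))"
  have "jacobi_op \<alpha> \<beta> R = smult (lead_coeff Q1) (smult \<mu> Q2) - smult (lead_coeff Q2) (smult \<mu> Q1)"
    using Q1 Q2 by (simp add: R_def jacobi_op_diff jacobi_op_smult jacobi_eigenpoly_def \<mu>_def)
  also have "\<dots> = smult \<mu> R" by (simp add: R_def smult_diff_right mult.commute)
  finally have JR: "jacobi_op \<alpha> \<beta> R = smult \<mu> R" .
  have "R = 0"
  proof (rule ccontr)
    assume "R \<noteq> 0"
    have "degree R \<le> k" using Q1 Q2 unfolding R_def jacobi_eigenpoly_def
      by (metis degree_diff_le degree_smult_le le_trans)
    moreover have "coeff R k = 0" using Q1 Q2 unfolding R_def jacobi_eigenpoly_def by simp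
    ultimately have lt: "degree R < k"
      using \<open>R \<noteq> 0\<close> by (metis le_neq_implies_less leading_coeff_0_iff)
    have "of_nat (degree R) * (of_nat (degree R) + \<alpha> + \<beta> + 1) = of_nat k * (of_nat k + \<alpha> + \<beta> + 1)"
      using jacobi_op_eigenvalue[OF JR \<open>R \<noteq> 0\<close>] by (simp add: \<mu>_def)
    then have "(of_nat (degree R) - of_nat k) * (of_nat (degree R + k) + \<alpha> + \<beta> + 1) = 0"
      by (simp add: algebra_simps)
    then show False using nd[OF lt] lt by simp
  qed
  then have "smult (inverse (lead_coeff Q1)) (smult (lead_coeff Q1) Q2)
      = smult (inverse (lead_coeff Q1)) (smult (lead_coeff Q2) Q1)"
    unfolding R_def by simp
  moreover have "lead_coeff Q1 \<noteq> 0"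
    using Q1 unfolding jacobi_eigenpoly_def by (metis leading_coeff_0_iff)
  ultimately show ?thesis by (simp add: field_simps)
qed

lemma poly_jacobi_eigenpoly_1_eq_0_iff:
  assumes Q: "jacobi_eigenpoly \<alpha> \<beta> k Q"
    and nd: "\<And>j. j < k \<Longrightarrow> of_nat (j + k) + \<alpha> + \<beta> + 1 \<noteq> (0 :: complex)"
  shows "poly Q 1 = 0 \<longleftrightarrow> (\<exists>j<k. of_nat j + \<alpha> + 1 = 0)"
proof -
  let ?P = "pcompose Q [:1, 1:]"
  have "degree ?P = k" and "?P \<noteq> 0"
    using Q by (simp_all add: jacobi_eigenpoly_def degree_pcompose)
  then have "coeff ?P k \<noteq> 0" by (metis leading_coeff_0_iff)
  then have c0: "coeff ?P 0 = 0 \<longleftrightarrow> (\<exists>j. 0 \<le> j \<and> j < k \<and> 2 * of_nat (Suc j) * (of_nat j + \<alpha> + 1) = 0)"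
    using jacobi_eigenpoly_shift_recurrence[OF Q] nd
    by (intro recurrence_eq_0_iff[where A = "\<lambda>j. (of_nat j - of_nat k) * (of_nat (j + k) + \<alpha> + \<beta> + 1)"])
      auto
  have B: "2 * of_nat (Suc j) * (of_nat j + \<alpha> + 1) = 0 \<longleftrightarrow> of_nat j + \<alpha> + 1 = (0 :: complex)"
    for j by (simp only: mult_eq_0_iff of_nat_eq_0_iff) simp
  have val: "poly Q 1 = coeff ?P 0"
    by (simp add: poly_0_coeff_0[symmetric] poly_pcompose)
  show ?thesis by (simp only: val c0 B) blast
qed

lemma jacobi_eigenpoly_reflect:
  assumes "jacobi_eigenpoly \<alpha> \<beta> k Q"
  shows "jacobi_eigenpoly \<beta> \<alpha> k (pcompose Q [:0, -1:])"
proof -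
  have "pcompose Q [:0, -1:] \<noteq> 0"
    using assms pcompose_eq_0[of Q "[:0, -1:]"] by (auto simp: jacobi_eigenpoly_def)
  then show ?thesis
    using assms arg_cong[of _ _ "\<lambda>P. pcompose P [:0, -1:]"]
    by (auto simp: jacobi_eigenpoly_def jacobi_op_reflect[symmetric] pcompose_smult degree_pcompose
        algebra_simps)
qed

lemma poly_jacobi_eigenpoly_minus1_eq_0_iff:
  assumes Q: "jacobi_eigenpoly \<alpha> \<beta> k Q"
    and nd: "\<And>j. j < k \<Longrightarrow> of_nat (j + k) + \<alpha> + \<beta> + 1 \<noteq> (0 :: complex)"
  shows "poly Q (-1) = 0 \<longleftrightarrow> (\<exists>j<k. of_nat j + \<beta> + 1 = 0)"
proof -
  have "poly Q (-1) = poly (pcompose Q [:0, -1:]) 1" by (simp add: poly_pcompose)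
  then show ?thesis
    using poly_jacobi_eigenpoly_1_eq_0_iff[OF jacobi_eigenpoly_reflect[OF Q]] nd
    by (simp add: add.commute add.left_commute)
qed

section \<open>Integer a and non-integer b\<close>

definition exponent_at_1 :: "nat \<Rightarrow> complex \<Rightarrow> complex" where
  "exponent_at_1 i A = (if i = 2 \<or> i = 3 then - A else 0)"

definition exponent_at_minus1 :: "nat \<Rightarrow> complex \<Rightarrow> complex" where
  "exponent_at_minus1 i B = (if i = 2 \<or> i = 4 then - B else 0)"

definition type_eigenpoly :: "complex \<Rightarrow> complex \<Rightarrow> nat \<Rightarrow> nat \<Rightarrow> complex poly \<Rightarrow> bool" where
  "type_eigenpoly A B i k Q \<longleftrightarrow>
     jacobi_eigenpoly (A + 2 * exponent_at_1 i A) (B + 2 * exponent_at_minus1 i B) k Q"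

text \<open>By qr_logderiv_type_eigenpoly_unique below, the choice of eigenpolynomial does not matter.\<close>

definition qr_eigen :: "complex \<Rightarrow> complex \<Rightarrow> nat \<Rightarrow> nat \<Rightarrow> rfun" where
  "qr_eigen A B i k =
     qr_logderiv (exponent_at_1 i A) (exponent_at_minus1 i B) (SOME Q. type_eigenpoly A B i k Q)"

definition admissible_index :: "nat \<Rightarrow> nat \<Rightarrow> nat \<Rightarrow> bool" where
  "admissible_index a i k \<longleftrightarrow> i \<in> {1, 2, 3, 4} \<and> (i = 2 \<or> i = 3 \<longrightarrow> k < a)"

lemma dshift_eq_exponents:
  "i \<in> {1, 2, 3, 4} \<Longrightarrow> dshift i A B = exponent_at_1 i A + exponent_at_minus1 i B"
  by (auto simp: dshift_def exponent_at_1_def exponent_at_minus1_def)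

lemma lam_eq_lam_1_dshift:
  "i \<in> {1, 2, 3, 4} \<Longrightarrow> lam i k A B = lam 1 (k + dshift i A B) A B"
  by (auto simp: lam_def dshift_def algebra_simps)

lemma lam_1_add:
  "lam 1 (of_nat k + (e1 + e2)) A B
     = lam 1 (e1 + e2) A B + of_nat k * (of_nat k + (A + 2 * e1) + (B + 2 * e2) + 1)"
  by (simp add: lam_def algebra_simps)

context
  fixes a :: nat and B :: complex
  assumes B_nonint: "B \<notin> \<int>"
begin

lemma type_nondegenerate:
  assumes "i \<in> {1, 2, 3, 4}"
  shows "of_nat (j + k) + (of_nat a + 2 * exponent_at_1 i (of_nat a)) + (B + 2 * exponent_at_minus1 i B) + 1 \<noteq> 0"
proof -
  let ?x = "of_nat (j + k) + (if i = 2 \<or> i = 3 then - of_nat a else of_nat a) + (1 :: complex)"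
  have "?x \<in> \<int>" by simp
  then have "?x + B \<noteq> 0" "?x - B \<noteq> 0" using Ints_add_nonint_neq_0[OF B_nonint] by blast+
  then show ?thesis
    using assms by (auto simp: exponent_at_1_def exponent_at_minus1_def algebra_simps)
qed

lemma type_eigenpoly_exists:
  assumes "i \<in> {1, 2, 3, 4}"
  shows "\<exists>Q. type_eigenpoly (of_nat a) B i k Q"
  using jacobi_eigenpoly_exists[OF type_nondegenerate[OF assms]]
  unfolding type_eigenpoly_def by metis

lemma poly_type_eigenpoly_minus1_nonzero:
  assumes i: "i \<in> {1, 2, 3, 4}" and Q: "type_eigenpoly (of_nat a) B i k Q"
  shows "poly Q (-1) \<noteq> 0"
proof -
  have "of_nat j + (B + 2 * exponent_at_minus1 i B) + 1 \<noteq> 0" for j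
    using Ints_add_nonint_neq_0[OF B_nonint, of "of_nat j + 1"]
    by (auto simp: exponent_at_minus1_def algebra_simps)
  then show ?thesis
    using poly_jacobi_eigenpoly_minus1_eq_0_iff[OF Q[unfolded type_eigenpoly_def] type_nondegenerate[OF i]]
    by blast
qed

lemma poly_type_eigenpoly_1_eq_0_iff:
  assumes i: "i \<in> {1, 2, 3, 4}" and Q: "type_eigenpoly (of_nat a) B i k Q"
  shows "poly Q 1 = 0 \<longleftrightarrow> (i = 2 \<or> i = 3) \<and> 0 < a \<and> a \<le> k"
proof -
  have "of_nat j + (of_nat a + 2 * exponent_at_1 i (of_nat a)) + 1 = (0 :: complex) \<longleftrightarrow>
      (i = 2 \<or> i = 3) \<and> j + 1 = a" for j
  proof (cases "i = 2 \<or> i = 3")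
    case True
    have "of_nat j + (of_nat a + 2 * exponent_at_1 i (of_nat a)) + 1 = of_nat (j + 1) - (of_nat a :: complex)"
      using True by (simp add: exponent_at_1_def)
    then show ?thesis using True by (simp only: right_minus_eq of_nat_eq_iff) simp
  next
    case False
    have "of_nat j + (of_nat a + 2 * exponent_at_1 i (of_nat a)) + 1 = (of_nat (j + a + 1) :: complex)"
      using False by (simp add: exponent_at_1_def)
    then show ?thesis using False by (simp only: of_nat_eq_0_iff) simp
  qed
  then have "poly Q 1 = 0 \<longleftrightarrow> (\<exists>j<k. (i = 2 \<or> i = 3) \<and> j + 1 = a)"
    using poly_jacobi_eigenpoly_1_eq_0_iff[OF Q[unfolded type_eigenpoly_def] type_nondegenerate[OF i]]
    by simp
  also have "\<dots> \<longleftrightarrow> (i = 2 \<or> i = 3) \<and> 0 < a \<and> a \<le> k"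
    by (metis Suc_eq_plus1 Suc_le_eq gr0_conv_Suc less_numeral_extra(3) zero_less_Suc)
  finally show ?thesis .
qed

lemma qr_logderiv_type_eigenpoly_unique:
  assumes i: "i \<in> {1, 2, 3, 4}"
    and Q1: "type_eigenpoly (of_nat a) B i k Q1" and Q2: "type_eigenpoly (of_nat a) B i k Q2"
  shows "qr_logderiv e1 e2 Q2 = qr_logderiv e1 e2 Q1"
proof -
  have "Q2 = smult (lead_coeff Q2 / lead_coeff Q1) Q1"
    using jacobi_eigenpoly_unique[OF type_nondegenerate[OF i]] Q1 Q2 by (simp add: type_eigenpoly_def)
  moreover have "lead_coeff Q2 / lead_coeff Q1 \<noteq> 0"
    using Q1 Q2 unfolding type_eigenpoly_def jacobi_eigenpoly_def
    by (metis divide_eq_0_iff leading_coeff_0_iff)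
  ultimately show ?thesis by (metis qr_logderiv_smult)
qed

lemma qr_eigenE:
  assumes adm: "admissible_index a i k"
  obtains Q where "type_eigenpoly (of_nat a) B i k Q" and "poly Q 1 \<noteq> 0" and "poly Q (-1) \<noteq> 0"
    and "qr_eigen (of_nat a) B i k = qr_logderiv (exponent_at_1 i (of_nat a)) (exponent_at_minus1 i B) Q"
proof
  let ?Q = "SOME Q. type_eigenpoly (of_nat a) B i k Q"
  have i: "i \<in> {1, 2, 3, 4}" using adm by (simp add: admissible_index_def)
  show Q: "type_eigenpoly (of_nat a) B i k ?Q"
    using type_eigenpoly_exists[OF i] by (rule someI_ex)
  show "poly ?Q 1 \<noteq> 0"
    using poly_type_eigenpoly_1_eq_0_iff[OF i Q] adm by (auto simp: admissible_index_def)
  show "poly ?Q (-1) \<noteq> 0"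
    using poly_type_eigenpoly_minus1_nonzero[OF i Q] .
qed (simp add: qr_eigen_def)

lemma qr_eigen_mem_Ric:
  assumes adm: "admissible_index a i k"
  shows "qr_eigen (of_nat a) B i k \<in> Ric (jacobiT (of_nat a) B) (lam i (of_nat k) (of_nat a) B)"
proof -
  obtain Q where Q: "type_eigenpoly (of_nat a) B i k Q" "poly Q 1 \<noteq> 0" "poly Q (-1) \<noteq> 0"
    and w: "qr_eigen (of_nat a) B i k = qr_logderiv (exponent_at_1 i (of_nat a)) (exponent_at_minus1 i B) Q"
    using qr_eigenE[OF adm] .
  have i: "i \<in> {1, 2, 3, 4}" using adm by (simp add: admissible_index_def)
  have "lam i (of_nat k) (of_nat a) B
      = lam 1 (exponent_at_1 i (of_nat a) + exponent_at_minus1 i B) (of_nat a) B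
        + of_nat k * (of_nat k + (of_nat a + 2 * exponent_at_1 i (of_nat a))
          + (B + 2 * exponent_at_minus1 i B) + 1)"
    using lam_eq_lam_1_dshift[OF i] dshift_eq_exponents[OF i] lam_1_add by simp
  then show ?thesis
    unfolding Ric_jacobiT_iff w using Q
    by (intro exI[of _ "exponent_at_1 i (of_nat a)"] exI[of _ "exponent_at_minus1 i B"] exI[of _ Q])
      (auto simp: type_eigenpoly_def jacobi_eigenpoly_def exponent_at_1_def exponent_at_minus1_def)
qed

lemma asym_type_qr_eigen:
  assumes adm: "admissible_index a i k"
  shows "asym_type (qr_eigen (of_nat a) B i k) = i"
proof -
  obtain Q where Q: "type_eigenpoly (of_nat a) B i k Q" "poly Q 1 \<noteq> 0" "poly Q (-1) \<noteq> 0"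
    and w: "qr_eigen (of_nat a) B i k = qr_logderiv (exponent_at_1 i (of_nat a)) (exponent_at_minus1 i B) Q"
    using qr_eigenE[OF adm] .
  have "Q \<noteq> 0" using Q(1) by (simp add: type_eigenpoly_def jacobi_eigenpoly_def)
  moreover have "B \<noteq> 0" using B_nonint by auto
  ultimately show ?thesis
    using adm has_pole_at_qr_logderiv_iff[OF _ Q(2,3)]
    by (auto simp: w asym_type_def admissible_index_def exponent_at_1_def exponent_at_minus1_def)
qed

lemma qr_degree_qr_eigen:
  assumes adm: "admissible_index a i k"
  shows "qr_degree (qr_eigen (of_nat a) B i k) - dshift i (of_nat a) B = of_nat k"
proof -
  obtain Q where Q: "type_eigenpoly (of_nat a) B i k Q"
    and w: "qr_eigen (of_nat a) B i k = qr_logderiv (exponent_at_1 i (of_nat a)) (exponent_at_minus1 i B) Q"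
    using qr_eigenE[OF adm] .
  have "Q \<noteq> 0" "degree Q = k" using Q by (simp_all add: type_eigenpoly_def jacobi_eigenpoly_def)
  then show ?thesis
    using adm dshift_eq_exponents[of i] by (simp add: w qr_degree_qr_logderiv admissible_index_def)
qed

lemma Ric_jacobiT_memE:
  assumes w: "w \<in> Ric (jacobiT (of_nat a) B) ev"
  obtains i k where "admissible_index a i k" and "ev = lam i (of_nat k) (of_nat a) B"
    and "w = qr_eigen (of_nat a) B i k"
proof -
  obtain e1 e2 Q where ind: "e1 * (e1 + of_nat a) = 0" "e2 * (e2 + B) = 0"
    and Q: "Q \<noteq> 0" "poly Q 1 \<noteq> 0" "poly Q (-1) \<noteq> 0" and wQ: "w = qr_logderiv e1 e2 Q"
    and J: "jacobi_op (of_nat a + 2 * e1) (B + 2 * e2) Q = smult (ev - lam 1 (e1 + e2) (of_nat a) B) Q"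
    using w unfolding Ric_jacobiT_iff by blast
  define k where "k = degree Q"
  define i :: nat where "i = (if e1 = 0 then if e2 = 0 then 1 else 4 else if e2 = 0 then 3 else 2)"
  have i: "i \<in> {1, 2, 3, 4}" by (simp add: i_def)
  have e: "e1 = exponent_at_1 i (of_nat a)" "e2 = exponent_at_minus1 i B"
    using ind by (auto simp: i_def exponent_at_1_def exponent_at_minus1_def eq_neg_iff_add_eq_0)
  have Qi: "type_eigenpoly (of_nat a) B i k Q"
    using jacobi_eigenpoly_degree[OF Q(1) J] e by (simp add: type_eigenpoly_def k_def)
  have "ev - lam 1 (e1 + e2) (of_nat a) B = of_nat k * (of_nat k + (of_nat a + 2 * e1) + (B + 2 * e2) + 1)"
    using jacobi_op_eigenvalue[OF J Q(1)] by (simp add: k_def add.assoc)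
  then have ev: "ev = lam i (of_nat k) (of_nat a) B"
    using lam_eq_lam_1_dshift[OF i] dshift_eq_exponents[OF i] lam_1_add[of k e1 e2] e
    by (simp add: algebra_simps)
  have "0 < a" if "i = 2 \<or> i = 3"
  proof -
    have "e1 \<noteq> 0" using that by (auto simp: i_def split: if_splits)
    then show ?thesis using e(1) that by (simp add: exponent_at_1_def)
  qed
  then have adm: "admissible_index a i k"
    using poly_type_eigenpoly_1_eq_0_iff[OF i Qi] Q(2) i by (auto simp: admissible_index_def)
  obtain Q' where "type_eigenpoly (of_nat a) B i k Q'"
    and "qr_eigen (of_nat a) B i k = qr_logderiv e1 e2 Q'"
    using qr_eigenE[OF adm] e by metis
  then have "w = qr_eigen (of_nat a) B i k"
    using qr_logderiv_type_eigenpoly_unique[OF i] Qi wQ by metis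
  with adm ev show ?thesis using that by blast
qed

theorem Ric_jacobiT_eq_qr_eigen:
  "Ric (jacobiT (of_nat a) B) ev =
     {qr_eigen (of_nat a) B i k | i k. admissible_index a i k \<and> lam i (of_nat k) (of_nat a) B = ev}"
  using Ric_jacobiT_memE qr_eigen_mem_Ric by blast

lemma lam_eq_lam_iff:
  assumes i: "admissible_index a i k" and j: "admissible_index a j l"
  shows "lam i (of_nat k) (of_nat a) B = lam j (of_nat l) (of_nat a) B \<longleftrightarrow>
    (i = j \<and> k = l) \<or> ((i = 2 \<and> j = 3 \<or> i = 3 \<and> j = 2) \<and> k + l + 1 = a)"
proof -
  define u v :: "nat \<Rightarrow> int"
    where "u i = (if i = 2 \<or> i = 3 then 1 else 0)" and "v i = (if i = 2 \<or> i = 4 then 1 else 0)" for i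
  have shift: "lam i (of_nat k) (of_nat a) B = lam 1 (of_int (int k - u i * int a) - of_int (v i) * B) (of_nat a) B"
    if "i \<in> {1, 2, 3, 4}" for i k
    using that by (auto simp: lam_def u_def v_def algebra_simps)
  have diff: "lam 1 x A B - lam 1 y A B = (x - y) * (x + y + A + B + 1)" for x y A B :: complex
    by (simp add: lam_def algebra_simps)
  define n1 m1 n2 m2
    where "n1 = int k - u i * int a - (int l - u j * int a)" and "m1 = v j - v i"
      and "n2 = int k - u i * int a + (int l - u j * int a) + int a + 1" and "m2 = 1 - v i - v j"
  let ?x = "of_int (int k - u i * int a) - of_int (v i) * B"
    and ?y = "of_int (int l - u j * int a) - of_int (v j) * B"
  have "lam i (of_nat k) (of_nat a) B - lam j (of_nat l) (of_nat a) B
      = lam 1 ?x (of_nat a) B - lam 1 ?y (of_nat a) B"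
    using shift[of i k] shift[of j l] i j by (simp add: admissible_index_def)
  also have "\<dots> = (?x - ?y) * (?x + ?y + of_nat a + B + 1)"
    by (rule diff)
  also have "\<dots> = (of_int n1 + of_int m1 * B) * (of_int n2 + of_int m2 * B)"
    by (simp add: n1_def m1_def n2_def m2_def algebra_simps)
  finally have "lam i (of_nat k) (of_nat a) B - lam j (of_nat l) (of_nat a) B
      = (of_int n1 + of_int m1 * B) * (of_int n2 + of_int m2 * B)" .
  moreover have "\<bar>m1\<bar> \<le> 1" "\<bar>m2\<bar> \<le> 1" by (simp_all add: m1_def m2_def v_def)
  ultimately have "lam i (of_nat k) (of_nat a) B = lam j (of_nat l) (of_nat a) B \<longleftrightarrow>
      (n1 = 0 \<and> m1 = 0) \<or> (n2 = 0 \<and> m2 = 0)"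
    using Ints_add_mult_nonint_eq_0_iff[OF B_nonint] by (simp add: eq_iff_diff_eq_0[of "lam i _ _ _"])
  moreover have "(n1 = 0 \<and> m1 = 0) \<or> (n2 = 0 \<and> m2 = 0) \<longleftrightarrow>
      (i = j \<and> k = l) \<or> ((i = 2 \<and> j = 3 \<or> i = 3 \<and> j = 2) \<and> k + l + 1 = a)"
    using i j unfolding admissible_index_def n1_def m1_def n2_def m2_def u_def v_def
    by (elim conjE insertE emptyE; simp; arith)
  ultimately show ?thesis by blast
qed

lemma index_set_eq:
  assumes "i \<in> {1, 2, 3, 4}"
  shows "index_set i (of_nat a) B = of_nat ` {k. admissible_index a i k}"
proof (intro set_eqI iffI)
  fix x assume "x \<in> index_set i (of_nat a) B"
  then obtain w ev where x: "x = qr_degree w - dshift i (of_nat a) B"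
    and w: "w \<in> Ric (jacobiT (of_nat a) B) ev" and t: "asym_type w = i"
    unfolding index_set_def by blast
  obtain j k where "admissible_index a j k" and "w = qr_eigen (of_nat a) B j k"
    using Ric_jacobiT_memE[OF w] by metis
  then show "x \<in> of_nat ` {k. admissible_index a i k}"
    using x t asym_type_qr_eigen qr_degree_qr_eigen by auto
next
  fix x :: complex assume "x \<in> of_nat ` {k. admissible_index a i k}"
  then obtain k where adm: "admissible_index a i k" and "x = of_nat k" by blast
  then have "x = qr_degree (qr_eigen (of_nat a) B i k) - dshift i (of_nat a) B"
    using qr_degree_qr_eigen by simp
  then show "x \<in> index_set i (of_nat a) B"
    unfolding index_set_def using qr_eigen_mem_Ric[OF adm] asym_type_qr_eigen[OF adm] by blast
qed

lemma sigma_check_eq: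
  assumes "i \<in> {1, 2, 3, 4}"
  shows "sigma_check i (of_nat a) B = (\<lambda>k. lam i (of_nat k) (of_nat a) B) ` {k. admissible_index a i k}"
  unfolding sigma_check_def index_set_eq[OF assms] image_image ..

lemma Ric_singleton:
  assumes i: "i = 1 \<or> i = 4" and ev: "ev \<in> sigma_check i (of_nat a) B"
  shows "\<exists>w. Ric (jacobiT (of_nat a) B) ev = {w} \<and> asym_type w = i"
proof -
  have adm: "admissible_index a i k" for k using i by (auto simp: admissible_index_def)
  obtain k where k: "ev = lam i (of_nat k) (of_nat a) B"
    using ev sigma_check_eq[of i] i by auto
  have "admissible_index a j l \<and> lam j (of_nat l) (of_nat a) B = ev \<longleftrightarrow> j = i \<and> l = k" for j l
    using lam_eq_lam_iff[of j l i k] adm i by (cases "admissible_index a j l") (auto simp: k)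
  then have "Ric (jacobiT (of_nat a) B) ev = {qr_eigen (of_nat a) B i k}"
    unfolding Ric_jacobiT_eq_qr_eigen by auto
  then show ?thesis using asym_type_qr_eigen[OF adm] by blast
qed

lemma Ric_pair:
  assumes ev: "ev \<in> sigma_check 2 (of_nat a) B"
  shows "\<exists>w2 w3. Ric (jacobiT (of_nat a) B) ev = {w2, w3} \<and> asym_type w2 = 2 \<and> asym_type w3 = 3"
proof -
  obtain k where k: "ev = lam 2 (of_nat k) (of_nat a) B" and "k < a"
    using ev sigma_check_eq[of 2] by (auto simp: admissible_index_def)
  then have adm: "admissible_index a 2 k" "admissible_index a 3 (a - 1 - k)"
    by (auto simp: admissible_index_def)
  have "admissible_index a j l \<and> lam j (of_nat l) (of_nat a) B = ev \<longleftrightarrow>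
      (j = 2 \<and> l = k) \<or> (j = 3 \<and> l = a - 1 - k)" for j l
    using lam_eq_lam_iff[of j l 2 k] adm \<open>k < a\<close>
    by (cases "admissible_index a j l") (auto simp: k admissible_index_def)
  then have "Ric (jacobiT (of_nat a) B) ev = {qr_eigen (of_nat a) B 2 k, qr_eigen (of_nat a) B 3 (a - 1 - k)}"
    unfolding Ric_jacobiT_eq_qr_eigen by auto
  then show ?thesis using asym_type_qr_eigen[OF adm(1)] asym_type_qr_eigen[OF adm(2)] by blast
qed

lemma sigma_check_2_eq_3: "sigma_check 2 (of_nat a) B = sigma_check 3 (of_nat a) B"
proof -
  have lam23: "lam 2 (of_nat k) (of_nat a) B = lam 3 (of_nat (a - 1 - k)) (of_nat a) B" if "k < a" for k
    using lam_eq_lam_iff[of 2 k 3 "a - 1 - k"] that by (simp add: admissible_index_def)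
  have types: "(2::nat) \<in> {1, 2, 3, 4}" "(3::nat) \<in> {1, 2, 3, 4}" by simp_all
  show ?thesis
    unfolding sigma_check_eq[OF types(1)] sigma_check_eq[OF types(2)]
  proof (intro set_eqI iffI)
    fix x assume "x \<in> (\<lambda>k. lam 2 (of_nat k) (of_nat a) B) ` {k. admissible_index a 2 k}"
    then obtain k where "k < a" "x = lam 2 (of_nat k) (of_nat a) B" by (auto simp: admissible_index_def)
    then show "x \<in> (\<lambda>k. lam 3 (of_nat k) (of_nat a) B) ` {k. admissible_index a 3 k}"
      using lam23 by (intro rev_image_eqI[of "a - 1 - k"]) (auto simp: admissible_index_def)
  next
    fix x assume "x \<in> (\<lambda>k. lam 3 (of_nat k) (of_nat a) B) ` {k. admissible_index a 3 k}"
    then obtain k where "k < a" "x = lam 3 (of_nat k) (of_nat a) B" by (auto simp: admissible_index_def)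
    moreover have "a - 1 - (a - 1 - k) = k" using \<open>k < a\<close> by simp
    ultimately show "x \<in> (\<lambda>k. lam 2 (of_nat k) (of_nat a) B) ` {k. admissible_index a 2 k}"
      using lam23[of "a - 1 - k"] by (intro rev_image_eqI[of "a - 1 - k"]) (auto simp: admissible_index_def)
  qed
qed

lemma sigma_qr_eq:
  "sigma_qr (jacobiT (of_nat a) B)
     = sigma_check 1 (of_nat a) B \<union> sigma_check 2 (of_nat a) B \<union> sigma_check 4 (of_nat a) B"
proof (intro set_eqI)
  fix ev
  have "ev \<in> sigma_qr (jacobiT (of_nat a) B) \<longleftrightarrow>
      (\<exists>i k. admissible_index a i k \<and> ev = lam i (of_nat k) (of_nat a) B)"
    unfolding sigma_qr_def Ric_jacobiT_eq_qr_eigen by blast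
  also have "\<dots> \<longleftrightarrow> (\<exists>i\<in>{1, 2, 3, 4}. ev \<in> sigma_check i (of_nat a) B)"
  proof
    assume "\<exists>i k. admissible_index a i k \<and> ev = lam i (of_nat k) (of_nat a) B"
    then obtain i k where adm: "admissible_index a i k" and "ev = lam i (of_nat k) (of_nat a) B"
      by blast
    moreover have i: "i \<in> {1, 2, 3, 4}" using adm by (simp add: admissible_index_def)
    ultimately have "ev \<in> sigma_check i (of_nat a) B"
      unfolding sigma_check_eq[OF i] by blast
    with i show "\<exists>i\<in>{1, 2, 3, 4}. ev \<in> sigma_check i (of_nat a) B" by blast
  next
    assume "\<exists>i\<in>{1, 2, 3, 4}. ev \<in> sigma_check i (of_nat a) B"
    then obtain i where i: "i \<in> {1, 2, 3, 4}" and "ev \<in> sigma_check i (of_nat a) B" by blast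
    then show "\<exists>i k. admissible_index a i k \<and> ev = lam i (of_nat k) (of_nat a) B"
      unfolding sigma_check_eq[OF i] by blast
  qed
  finally show "ev \<in> sigma_qr (jacobiT (of_nat a) B) \<longleftrightarrow>
      ev \<in> sigma_check 1 (of_nat a) B \<union> sigma_check 2 (of_nat a) B \<union> sigma_check 4 (of_nat a) B"
    using sigma_check_2_eq_3 by auto
qed

lemma sigma_check_disjoint:
  "sigma_check 1 (of_nat a) B \<inter> sigma_check 2 (of_nat a) B = {}"
  "sigma_check 1 (of_nat a) B \<inter> sigma_check 4 (of_nat a) B = {}"
  "sigma_check 2 (of_nat a) B \<inter> sigma_check 4 (of_nat a) B = {}"
  using lam_eq_lam_iff sigma_check_eq[of 1] sigma_check_eq[of 2] sigma_check_eq[of 4]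
  by (auto simp: admissible_index_def)

end

theorem mainTheorem16:
  fixes a :: nat and b :: real
  assumes hb: "b \<notin> \<int>"
  defines "A \<equiv> (of_nat a :: complex)" and "B \<equiv> complex_of_real b"
  shows "index_set 1 A B = of_nat ` UNIV
    \<and> index_set 4 A B = of_nat ` UNIV
    \<and> index_set 2 A B = of_nat ` {..<a}
    \<and> index_set 3 A B = of_nat ` {..<a}
    \<and> (\<forall>ev\<in>sigma_check 1 A B. \<exists>w. Ric (jacobiT A B) ev = {w} \<and> asym_type w = 1)
    \<and> (\<forall>ev\<in>sigma_check 4 A B. \<exists>w. Ric (jacobiT A B) ev = {w} \<and> asym_type w = 4)
    \<and> sigma_check 2 A B = sigma_check 3 A B
    \<and> (\<forall>ev\<in>sigma_check 2 A B. \<exists>w2 w3. Ric (jacobiT A B) ev = {w2, w3}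
          \<and> asym_type w2 = 2 \<and> asym_type w3 = 3)
    \<and> sigma_qr (jacobiT A B) = sigma_check 1 A B \<union> sigma_check 2 A B \<union> sigma_check 4 A B
    \<and> sigma_check 1 A B \<inter> sigma_check 2 A B = {}
    \<and> sigma_check 1 A B \<inter> sigma_check 4 A B = {}
    \<and> sigma_check 2 A B \<inter> sigma_check 4 A B = {}"
proof -
  have B: "B \<notin> \<int>" using hb by (simp add: B_def)
  have index: "index_set i A B = of_nat ` {k. admissible_index a i k}" if "i \<in> {1, 2, 3, 4}" for i
    unfolding A_def using index_set_eq[OF B that] .
  have "{k. admissible_index a i k} = UNIV" if "i = 1 \<or> i = 4" for i
    using that by (auto simp: admissible_index_def)
  moreover have "{k. admissible_index a i k} = {..<a}" if "i = 2 \<or> i = 3" for i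
    using that by (auto simp: admissible_index_def)
  ultimately show ?thesis
    using index Ric_singleton[OF B, of 1] Ric_singleton[OF B, of 4] Ric_pair[OF B]
      sigma_check_2_eq_3[OF B] sigma_qr_eq[OF B] sigma_check_disjoint[OF B]
    unfolding A_def by simp
qed

end
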